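(* For every $\lambda>\lambda^*$, $\dfrac{G(e(\lambda))}{\lambda}<\dfrac{1}{a^*}$, where $a^*=\max_{1\le i\le p}a_i$.
   Context: Standing setup. Let $\gamma>0$; let $a_1,\dots,a_p>0$ with weights $\omega_i>0$, $\sum_i\omega_i=1$, and $b_1,\dots,b_n>0$ with weights $\pi_j>0$, $\sum_j\pi_j=1$. Let $\mu$ be the limiting spectral distribution of $\mathbf{N}\mathbf{N}^T$ where $\mathbf{N}=\mathbf{A}^{1/2}\mathbf{G}\mathbf{B}^{1/2}$ is $k\times l$, $\mathbf{G}$ has iid mean-zero entries of variance $1/l$, $k/l\to\gamma$, and the spectral distributions of $\mathbf{A},\mathbf{B}$ converge to $\nu=\sum_i\omega_i\delta_{a_i}$ and $\underline{\nu}=\sum_j\pi_j\delta_{b_j}$. $\mu$ is a compactly supported probability measure on $[0,\infty)$; $\lambda^*>0$ is the right endpoint of its support, and $s(\lambda)=\int\frac{d\mu(t)}{t-\lambda}$ for $\lambda>\lambda^*$. Define $G(e)=\sum_{j=1}^n\frac{b_j\pi_j}{1+\gamma b_j e}$. It is known (master equations) that there is a continuous (indeed smooth) real function $e(\lambda)$ on $(\lambda^*,\infty)$, never equal to a pole $-1/(\gamma b_j)$ of $G$ and with $a_iG(e(\lambda))\ne\lambda$ for all $i$, satisfying $s(\lambda)=\sum_{i=1}^p\frac{\omega_i}{a_iG(e(\lambda))-\lambda}$ and $e(\lambda)=\sum_{i=1}^p\frac{a_i\omega_i}{a_iG(e(\lambda))-\lambda}$. *)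

theory Defs
  imports "HOL-Probability.Probability"
begin

definition Gfun :: "real \<Rightarrow> (nat \<Rightarrow> real) \<Rightarrow> (nat \<Rightarrow> real) \<Rightarrow> nat \<Rightarrow> real \<Rightarrow> real" where
  "Gfun \<gamma> b \<pi> n e = (\<Sum>j=1..n. b j * \<pi> j / (1 + \<gamma> * b j * e))"

definition measure_support :: "real measure \<Rightarrow> real set" where
  "measure_support M = {x. \<forall>\<epsilon>>0. emeasure M (ball x \<epsilon>) > 0}"

definition stieltjes :: "real measure \<Rightarrow> real \<Rightarrow> real" where
  "stieltjes M x = integral\<^sup>L M (\<lambda>t. 1 / (t - x))"

end

theory Submission imports Defs begin

text \<open>Eliminating the Stieltjes transform between the two master equations gives
  G(e(x)) e(x) = 1 + x s(x), and s(x) \<ge> -1/(x - \<lambda>*) because \<mu> is carried by (-\<infinity>, \<lambda>*].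
  Hence e(x) cannot be very negative wherever a* G(e(x)) \<ge> x, which keeps G(e(x)) bounded
  there; so a* G(e(x)) < x for large x. The continuous function x - a* G(e(x)) never
  vanishes, since a* is one of the a_i, so it stays positive on all of (\<lambda>*, \<infinity>).\<close>

lemma AE_le_Sup_measure_support:
  fixes \<mu> :: "real measure"
  assumes "sets \<mu> = sets borel" and "compact (measure_support \<mu>)"
  shows "AE t in \<mu>. t \<le> Sup (measure_support \<mu>)"
proof -
  define l where "l = Sup (measure_support \<mu>)"
  define F where "F = {ball t r | t r. r > 0 \<and> emeasure \<mu> (ball t r) = 0}"
  have "\<And>S. S \<in> F \<Longrightarrow> openin (top_of_set UNIV) S" unfolding F_def by auto
  then obtain F' where F': "F' \<subseteq> F" "countable F'" "\<Union>F' = \<Union>F"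
    using Lindelof_openin by blast
  have bdd: "bdd_above (measure_support \<mu>)"
    using assms(2) by (intro bounded_imp_bdd_above compact_imp_bounded)
  have "{l<..} \<subseteq> \<Union>F"
  proof
    fix t assume "t \<in> {l<..}"
    hence "t \<notin> measure_support \<mu>" using cSup_upper[OF _ bdd] l_def by force
    then obtain r where "r > 0" "emeasure \<mu> (ball t r) = 0"
      unfolding measure_support_def by (auto simp: not_less)
    hence "ball t r \<in> F" unfolding F_def by auto
    thus "t \<in> \<Union>F" using \<open>r > 0\<close> by (intro UnionI[of "ball t r"]) auto
  qed
  have "(\<Union>S\<in>F'. S) \<in> null_sets \<mu>"
  proof (rule null_sets_UN'[OF F'(2)])
    fix S assume "S \<in> F'"
    then obtain t r where "S = ball t r" "emeasure \<mu> (ball t r) = 0"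
      using F'(1) unfolding F_def by auto
    thus "S \<in> null_sets \<mu>" using assms(1) by (auto simp: null_sets_def)
  qed
  moreover have "{t \<in> space \<mu>. \<not> t \<le> l} \<subseteq> (\<Union>S\<in>F'. S)"
    using \<open>{l<..} \<subseteq> \<Union>F\<close> F'(3) by auto
  ultimately show ?thesis unfolding l_def by (rule AE_I')
qed

lemma stieltjes_ge:
  fixes \<mu> :: "real measure"
  assumes "prob_space \<mu>" and "AE t in \<mu>. t \<le> l" and "x > l"
  shows "stieltjes \<mu> x \<ge> - 1 / (x - l)"
proof (cases "integrable \<mu> (\<lambda>t. 1 / (t - x))")
  case True
  have "AE t in \<mu>. - 1 / (x - l) \<le> 1 / (t - x)"
    using assms(2)
  proof (rule AE_mp, intro AE_I2 impI)
    fix t assume "t \<le> l"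
    hence "1 / (x - t) \<le> 1 / (x - l)" using \<open>x > l\<close> by (intro divide_left_mono) auto
    moreover have "1 / (t - x) = - (1 / (x - t))" by (simp add: divide_simps)
    ultimately show "- 1 / (x - l) \<le> 1 / (t - x)" by simp
  qed
  hence "integral\<^sup>L \<mu> (\<lambda>t. - 1 / (x - l)) \<le> integral\<^sup>L \<mu> (\<lambda>t. 1 / (t - x))"
    using True assms(1)
    by (intro integral_mono_AE) (auto simp: prob_space_def finite_measure.integrable_const)
  thus ?thesis using assms(1) unfolding stieltjes_def by (simp add: prob_space.prob_space)
next
  case False
  \<comment> \<open>the Lebesgue integral of a non-integrable function is 0\<close>
  thus ?thesis using assms(3) unfolding stieltjes_def by (simp add: not_integrable_integral_eq)
qed

lemma master_sums_eliminate:
  fixes a \<omega> :: "'i \<Rightarrow> real"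
  assumes "\<forall>i\<in>I. a i * g \<noteq> x"
  shows "g * (\<Sum>i\<in>I. a i * \<omega> i / (a i * g - x)) - x * (\<Sum>i\<in>I. \<omega> i / (a i * g - x))
       = (\<Sum>i\<in>I. \<omega> i)"
proof -
  have "g * (a i * \<omega> i / (a i * g - x)) - x * (\<omega> i / (a i * g - x)) = \<omega> i" if "i \<in> I" for i
  proof -
    have "g * (a i * \<omega> i / (a i * g - x)) - x * (\<omega> i / (a i * g - x))
        = \<omega> i * ((a i * g - x) / (a i * g - x))" by (simp add: field_simps diff_divide_distrib)
    thus ?thesis using assms that by simp
  qed
  thus ?thesis by (simp add: sum_distrib_left sum_subtractf[symmetric])
qed

lemma master_product_ge:
  fixes \<mu> :: "real measure" and a \<omega> :: "'i \<Rightarrow> real"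
  assumes "prob_space \<mu>" and "AE t in \<mu>. t \<le> l" and "l \<ge> 0" and "y > l"
    and "\<forall>i\<in>I. a i * g \<noteq> y" and "(\<Sum>i\<in>I. \<omega> i) = 1"
    and s: "stieltjes \<mu> y = (\<Sum>i\<in>I. \<omega> i / (a i * g - y))"
    and e: "e = (\<Sum>i\<in>I. a i * \<omega> i / (a i * g - y))"
  shows "g * e \<ge> - l / (y - l)"
proof -
  have "g * e = 1 + y * stieltjes \<mu> y"
    using master_sums_eliminate[OF assms(5), of \<omega>] assms(6) unfolding s e by simp
  moreover have "y * stieltjes \<mu> y \<ge> y * (- 1 / (y - l))"
    using stieltjes_ge[OF assms(1,2,4)] assms(3,4) by (intro mult_left_mono) auto
  moreover have "1 + y * (- 1 / (y - l)) = - l / (y - l)"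
    using assms(4) by (simp add: field_simps)
  ultimately show ?thesis by linarith
qed

lemma continuous_on_Gfun_comp:
  assumes "continuous_on S e" and "\<forall>x\<in>S. \<forall>j\<in>{1..n}. 1 + \<gamma> * b j * e x \<noteq> 0"
  shows "continuous_on S (\<lambda>x. Gfun \<gamma> b \<pi> n (e x))"
  unfolding Gfun_def using assms by (intro continuous_intros) auto

lemma Gfun_le_twice:
  assumes "\<forall>j\<in>{1..n}. b j \<ge> 0 \<and> \<pi> j \<ge> 0" and "\<forall>j\<in>{1..n}. \<gamma> * b j * e \<ge> - 1/2"
  shows "Gfun \<gamma> b \<pi> n e \<le> 2 * (\<Sum>j=1..n. b j * \<pi> j)"
  unfolding Gfun_def sum_distrib_left
proof (rule sum_mono)
  fix j assume "j \<in> {1..n}"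
  hence "b j * \<pi> j \<ge> 0" "\<gamma> * b j * e \<ge> - 1/2" using assms by simp_all
  hence "b j * \<pi> j \<ge> 0" "1 + \<gamma> * b j * e \<ge> 1/2" by simp_all
  hence "b j * \<pi> j / (1 + \<gamma> * b j * e) \<le> b j * \<pi> j / (1/2)" by (intro divide_left_mono) auto
  thus "b j * \<pi> j / (1 + \<gamma> * b j * e) \<le> 2 * (b j * \<pi> j)" by simp
qed

lemma ge_neg_if_mult_ge:
  fixes A c y G e :: real
  assumes "A > 0" "y > 0" "c \<ge> 0" "G \<ge> y / A" "G * e \<ge> - c"
  shows "e \<ge> - A * c / y"
proof (cases "e \<ge> 0")
  case True
  moreover have "A * c / y \<ge> 0" using assms(1-3) by simp
  ultimately show ?thesis by simp
next
  case False
  hence "(y / A) * e \<ge> - c" using assms(4,5) mult_right_mono_neg[of "y / A" G e] by linarith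
  hence "(A / y) * ((y / A) * e) \<ge> (A / y) * (- c)" using assms(1,2) by (intro mult_left_mono) auto
  thus ?thesis using assms(1,2) by simp
qed

lemma eventually_Gfun_below_diagonal:
  fixes e :: "real \<Rightarrow> real"
  assumes "A > 0" "l > 0" "\<gamma> \<ge> 0" and "\<forall>j\<in>{1..n}. b j \<ge> 0 \<and> \<pi> j \<ge> 0"
    and prod_ge: "\<forall>y>l. Gfun \<gamma> b \<pi> n (e y) * e y \<ge> - l / (y - l)"
  shows "eventually (\<lambda>y. A * Gfun \<gamma> b \<pi> n (e y) < y) at_top"
proof -
  define B where "B = (\<Sum>j=1..n. b j * \<pi> j)"
  have "eventually (\<lambda>y. y \<ge> 2 * l \<and> y \<ge> 1 \<and> y > 2 * A * B
          \<and> (\<forall>j\<in>{1..n}. 4 * \<gamma> * b j * A * l \<le> y)) at_top"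
    by (intro eventually_conj eventually_ball_finite ballI eventually_ge_at_top eventually_gt_at_top)
      simp
  thus ?thesis
  proof (rule eventually_mono, elim conjE)
    fix y assume y: "y \<ge> 2 * l" "y \<ge> 1" "y > 2 * A * B"
      and large: "\<forall>j\<in>{1..n}. 4 * \<gamma> * b j * A * l \<le> y"
    define G where "G = Gfun \<gamma> b \<pi> n (e y)"
    show "A * G < y"
    proof (rule ccontr)
      assume "\<not> A * G < y"
      hence G_ge: "G \<ge> y / A" using \<open>A > 0\<close> by (simp add: field_simps)
      have "y > l" using y \<open>l > 0\<close> by linarith
      hence "G * e y \<ge> - l / (y - l)" using prod_ge unfolding G_def by blast
      moreover have "l / (y - l) \<le> l / (y / 2)"
        using y \<open>l > 0\<close> by (intro divide_left_mono) auto
      ultimately have Ge_ge: "G * e y \<ge> - (2 * l / y)" by (simp add: mult_ac)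
      have e_ge: "e y \<ge> - A * (2 * l / y) / y"
        using \<open>A > 0\<close> \<open>l > 0\<close> y G_ge Ge_ge by (intro ge_neg_if_mult_ge) auto
      have "\<forall>j\<in>{1..n}. \<gamma> * b j * e y \<ge> - 1/2"
      proof
        fix j assume "j \<in> {1..n}"
        hence "b j \<ge> 0" "4 * \<gamma> * b j * A * l \<le> y" using assms(4) large by auto
        moreover have "y \<le> y * y" using y by simp
        ultimately have "4 * (\<gamma> * b j * A * l) \<le> y * y" by linarith
        hence "2 * (\<gamma> * b j * A * l) / (y * y) \<le> 1/2" using y by (simp add: divide_le_eq)
        hence "\<gamma> * b j * (- A * (2 * l / y) / y) \<ge> - 1/2" by (simp add: algebra_simps)
        moreover have "\<gamma> * b j * e y \<ge> \<gamma> * b j * (- A * (2 * l / y) / y)"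
          using e_ge \<open>b j \<ge> 0\<close> \<open>\<gamma> \<ge> 0\<close> by (intro mult_left_mono) auto
        ultimately show "\<gamma> * b j * e y \<ge> - 1/2" by linarith
      qed
      hence "G \<le> 2 * B" unfolding G_def B_def using assms(4) by (rule Gfun_le_twice[rotated])
      hence "A * G \<le> 2 * A * B" using \<open>A > 0\<close> by simp
      thus False using y \<open>\<not> A * G < y\<close> by linarith
    qed
  qed
qed

lemma below_diagonal_if_eventually_below:
  fixes f :: "real \<Rightarrow> real"
  assumes "continuous_on {l<..} f" and "\<forall>t>l. f t \<noteq> t"
    and "eventually (\<lambda>t. f t < t) at_top" and "x > l"
  shows "f x < x"
proof (rule ccontr)
  assume "\<not> f x < x"
  obtain N where N: "\<forall>t\<ge>N. f t < t"
    using assms(3) unfolding eventually_at_top_linorder by blast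
  define y where "y = max x N"
  have "f y < y" "x \<le> y" using N unfolding y_def by auto
  have "continuous_on {x..y} f"
    by (rule continuous_on_subset[OF assms(1)]) (use \<open>x > l\<close> in auto)
  hence "continuous_on {x..y} (\<lambda>t. t - f t)" by (intro continuous_intros)
  then obtain t where "x \<le> t" "t - f t = 0"
    using IVT'[of "\<lambda>t. t - f t" x 0 y] \<open>\<not> f x < x\<close> \<open>f y < y\<close> \<open>x \<le> y\<close> by auto
  hence "t > l" "f t = t" using \<open>x > l\<close> by auto
  thus False using assms(2) by blast
qed

theorem lemma3p6:
  fixes \<gamma> :: real and p n :: nat
    and a \<omega> b \<pi> :: "nat \<Rightarrow> real"
    and \<mu> :: "real measure" and lstar :: real
    and e :: "real \<Rightarrow> real"
  assumes gamma_pos: "\<gamma> > 0"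
    and a_pos: "\<forall>i\<in>{1..p}. a i > 0" and \<omega>_pos: "\<forall>i\<in>{1..p}. \<omega> i > 0"
    and \<omega>_sum: "(\<Sum>i=1..p. \<omega> i) = 1"
    and b_pos: "\<forall>j\<in>{1..n}. b j > 0" and \<pi>_pos: "\<forall>j\<in>{1..n}. \<pi> j > 0"
    and \<pi>_sum: "(\<Sum>j=1..n. \<pi> j) = 1"
    and mu_prob: "prob_space \<mu>" and mu_sets: "sets \<mu> = sets borel"
    and mu_compact: "compact (measure_support \<mu>)"
    and mu_nonneg: "measure_support \<mu> \<subseteq> {0..}"
    and lstar_def: "lstar = Sup (measure_support \<mu>)"
    and lstar_pos: "lstar > 0"
    and e_cont: "continuous_on {lstar<..} e"
    and e_nopole: "\<forall>x>lstar. \<forall>j\<in>{1..n}. e x \<noteq> - 1 / (\<gamma> * b j)"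
    and e_nores: "\<forall>x>lstar. \<forall>i\<in>{1..p}. a i * Gfun \<gamma> b \<pi> n (e x) \<noteq> x"
    and master_s: "\<forall>x>lstar. stieltjes \<mu> x =
        (\<Sum>i=1..p. \<omega> i / (a i * Gfun \<gamma> b \<pi> n (e x) - x))"
    and master_e: "\<forall>x>lstar. e x =
        (\<Sum>i=1..p. a i * \<omega> i / (a i * Gfun \<gamma> b \<pi> n (e x) - x))"
  shows "\<forall>x>lstar. Gfun \<gamma> b \<pi> n (e x) / x < 1 / Max (a ` {1..p})"
proof (intro allI impI)
  fix x assume "x > lstar"
  define A where "A = Max (a ` {1..p})"
  have "p \<ge> 1" using \<omega>_sum by (cases p) auto
  hence "A \<in> a ` {1..p}" unfolding A_def by (intro Max_in) auto
  then obtain k where k: "k \<in> {1..p}" "a k = A" by auto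
  have "A > 0" using k a_pos by auto
  have AE: "AE t in \<mu>. t \<le> lstar"
    unfolding lstar_def using mu_sets mu_compact by (rule AE_le_Sup_measure_support)
  have "\<forall>y>lstar. Gfun \<gamma> b \<pi> n (e y) * e y \<ge> - lstar / (y - lstar)"
    using lstar_pos e_nores \<omega>_sum master_s master_e
    by (intro allI impI master_product_ge[OF mu_prob AE, of _ "{1..p}" a]) auto
  hence "eventually (\<lambda>y. A * Gfun \<gamma> b \<pi> n (e y) < y) at_top"
    using \<open>A > 0\<close> lstar_pos gamma_pos b_pos \<pi>_pos
    by (intro eventually_Gfun_below_diagonal) (auto intro: less_imp_le)
  moreover have "continuous_on {lstar<..} (\<lambda>y. A * Gfun \<gamma> b \<pi> n (e y))"
  proof (intro continuous_intros continuous_on_Gfun_comp e_cont ballI notI)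
    fix y j assume "y \<in> {lstar<..}" "j \<in> {1..n}" "1 + \<gamma> * b j * e y = 0"
    moreover have "\<gamma> * b j \<noteq> 0" using gamma_pos b_pos \<open>j \<in> {1..n}\<close> by force
    ultimately have "e y = - 1 / (\<gamma> * b j)" by (simp add: field_simps)
    thus False using e_nopole \<open>y \<in> {lstar<..}\<close> \<open>j \<in> {1..n}\<close> by auto
  qed
  moreover have "\<forall>y>lstar. A * Gfun \<gamma> b \<pi> n (e y) \<noteq> y" using e_nores k by auto
  ultimately have "A * Gfun \<gamma> b \<pi> n (e x) < x"
    using \<open>x > lstar\<close> by (intro below_diagonal_if_eventually_below)
  thus "Gfun \<gamma> b \<pi> n (e x) / x < 1 / A"
    using \<open>A > 0\<close> \<open>x > lstar\<close> lstar_pos by (simp add: field_simps)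
qed

end
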